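(* Let $\ell$ be a finite linear order with $n=|\ell|\ge2$, let $\mathscr T$ be a Schröder tree on $\ell$ enriched with connected graphs, with root $r$, and $g=\bigvee\mathscr T$. Then $$\sigma(L(g^c))=0\cdot\Big(\prod_{w\in\mathrm{Iv}(\mathscr T),\,w\neq r}\varphi_{n-N_{rw}}\big(-\sigma(\mathscr L(g_w))\big)\Big)\cdot\varphi_n\big(-\sigma(\mathscr L(g_r))\big),$$ where $-\sigma$ denotes the multiset of negatives of the elements of $\sigma$.
   Context: All graphs finite and simple; $g^c$ complement; $L(\cdot)$ Laplacian. Spectra are multisets written multiplicatively (product = multiset union). Generalized composition: for a segmented partition $\pi=(\ell_1,\dots,\ell_k)$ of $\ell$ (nonempty consecutive segments whose concatenation is $\ell$), graphs $g_{\ell_j}$ on $\ell_j$ and a graph $h$ on $\pi$, $\bigvee_h(g_{\ell_1},\dots,g_{\ell_k})$ has vertex set $\ell$ and edges those of the $g_{\ell_j}$ plus all $\{x,y\}$, $x\in\ell_i,y\in\ell_j$, $\{\ell_i,\ell_j\}\in E(h)$. Graph-enriched Schröder tree on $\ell$: rooted plane tree with leaves the elements of $\ell$ left to right, each internal vertex with at least two children, and a graph $g_v$ on $\pi_v=(\ell_{v_1},\dots,\ell_{v_k})$ for each internal $v$ (children $v_1,\dots,v_k$ left to right, $\ell_u$ the leaves below $u$). Enriched with connected graphs means every $g_v$ is connected. $\mathrm{Iv}(\mathscr T)$ internal vertices; $\bigvee$ of a leaf is the one-vertex graph and $\bigvee\mathscr T=\bigvee_{g_r}(\bigvee\mathscr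 T_{r_1},\dots,\bigvee\mathscr T_{r_k})$. $\mathscr L(g_v)$: with $n_i=|\ell_{v_i}|$, $N_i=\sum_{s:\{\ell_{v_s},\ell_{v_i}\}\in E(g_v)}n_s$, the $k\times k$ matrix with diagonal $N_i$ and $(i,j)$ entry ($i\ne j$) $-\sqrt{n_in_j}$ if $\{\ell_{v_i},\ell_{v_j}\}\in E(g_v)$, else $0$. For non-root internal $w$ with parent $u$, $N_w=\sum_{x:\{\ell_x,\ell_w\}\in E(g_u)}|\ell_x|$, and $N_{rw}=N_{w_1}+\cdots+N_{w_m}$ along the path $r=w_0,w_1,\dots,w_m=w$. $\varphi_s(\omega)$, for a finite multiset $\omega$ of reals and $s\in\mathbb R$: remove one occurrence of $0$ from $\omega$ if present, then add $s$ to every remaining element. *)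

theory Defs
  imports "Jordan_Normal_Form.Char_Poly" "HOL-Library.Multiset"
begin

text \<open>A leaf carries an element of the linear order; an internal vertex carries the
  graph g_v on its children, given as a set of pairs of child indices (0-based, left
  to right), together with the list of its subtrees.\<close>
datatype 'a stree = Leaf 'a | Node "(nat \<times> nat) set" "'a stree list"

fun leaves :: "'a stree \<Rightarrow> 'a list" where
  "leaves (Leaf x) = [x]"
| "leaves (Node G ts) = concat (map leaves ts)"

fun wf_ctree :: "'a stree \<Rightarrow> bool" where
  "wf_ctree (Leaf x) = True"
| "wf_ctree (Node G ts) =
     (length ts \<ge> 2 \<and>
      G \<subseteq> {0..<length ts} \<times> {0..<length ts} \<and>
      sym G \<and> (\<forall>i. (i, i) \<notin> G) \<and>
      (\<forall>i<length ts. \<forall>j<length ts. (i, j) \<in> G\<^sup>*) \<and>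
      (\<forall>t\<in>set ts. wf_ctree t))"

fun comp_edges :: "'a stree \<Rightarrow> ('a \<times> 'a) set" where
  "comp_edges (Leaf x) = {}"
| "comp_edges (Node G ts) =
     (\<Union>t\<in>set ts. comp_edges t) \<union>
     {(x, y). \<exists>i j. (i, j) \<in> G \<and> i < length ts \<and> j < length ts \<and>
                     x \<in> set (leaves (ts ! i)) \<and> y \<in> set (leaves (ts ! j))}"

definition compl_edges :: "'a list \<Rightarrow> ('a \<times> 'a) set \<Rightarrow> ('a \<times> 'a) set" where
  "compl_edges vs E = {(x, y). x \<in> set vs \<and> y \<in> set vs \<and> x \<noteq> y \<and> (x, y) \<notin> E}"

definition laplacian_mat :: "'a list \<Rightarrow> ('a \<times> 'a) set \<Rightarrow> real mat" where
  "laplacian_mat vs E = mat (length vs) (length vs) (\<lambda>(i, j).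
     if i = j then real (card {k. k < length vs \<and> (vs ! i, vs ! k) \<in> E})
     else if (vs ! i, vs ! j) \<in> E then -1 else 0)"

text \<open>Spectrum (multiset of eigenvalues with algebraic multiplicity): the multiset of
  roots of the characteristic polynomial, when it splits over the reals.\<close>
definition mspec :: "real mat \<Rightarrow> real multiset" where
  "mspec A = (THE \<sigma>. char_poly A = prod_mset (image_mset (\<lambda>x. [:- x, 1:]) \<sigma>))"

definition csize :: "'a stree list \<Rightarrow> nat \<Rightarrow> real" where
  "csize ts i = real (length (leaves (ts ! i)))"

definition Nbr :: "(nat \<times> nat) set \<Rightarrow> 'a stree list \<Rightarrow> nat \<Rightarrow> real" where
  "Nbr G ts i = (\<Sum>s\<in>{s. s < length ts \<and> (s, i) \<in> G}. csize ts s)"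

definition qlap :: "(nat \<times> nat) set \<Rightarrow> 'a stree list \<Rightarrow> real mat" where
  "qlap G ts = mat (length ts) (length ts) (\<lambda>(i, j).
     if i = j then Nbr G ts i
     else if (i, j) \<in> G then - sqrt (csize ts i * csize ts j) else 0)"

definition phi :: "real \<Rightarrow> real multiset \<Rightarrow> real multiset" where
  "phi s \<omega> = image_mset (\<lambda>x. x + s) (\<omega> - {#0#})"

definition neg_ms :: "real multiset \<Rightarrow> real multiset" where
  "neg_ms \<omega> = image_mset uminus \<omega>"

text \<open>tree_part n a T, for an internal vertex w with a = N_{rw} (a = 0 for the root),
  is the multiset union of phi_{n - N_{rw'}}(- sigma(L(g_{w'}))) over all internal
  vertices w' of the subtree rooted at w. Passing to child i of w adds N_i (the
  quantity N_{w_i} of the statement), so N_{rw} accumulates along the path.\<close>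
function tree_part :: "nat \<Rightarrow> real \<Rightarrow> 'a stree \<Rightarrow> real multiset" where
  "tree_part n a (Leaf x) = {#}"
| "tree_part n a (Node G ts) =
     phi (real n - a) (neg_ms (mspec (qlap G ts))) +
     sum_list (map (\<lambda>(i, t). tree_part n (a + Nbr G ts i) t) (zip [0..<length ts] ts))"
  by pat_completeness auto
termination
  by (relation "measure (\<lambda>(n, a, t). size t)")
     (auto dest!: set_zip_rightD simp: le_imp_less_Suc size_list_estimation')

end

(*
  Every row of L(g) sums to 0, so deflating by the all-ones vector gives
  char L(g) = x * p(x). Since L(g^c) = n I - J - L(g) and J vanishes after deflation,
  the spectrum of L(g^c) is 0 together with n - mu, where mu is the Laplacian spectrum
  of g with one 0 removed.

  mu is computed along the tree. At an internal vertex the leaf sets of the children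
  form an equitable partition of the Laplacian of the composition: the row sums over a
  part depend only on the two parts involved. Conjugating by a unipotent matrix splits
  the characteristic polynomial into that of the quotient matrix, which is similar to
  \mathscr L(g_v) via diag(sqrt n_i), and a block diagonal part whose i-th block is the
  deflated Laplacian of the i-th child shifted by N_i. Accumulating the shifts along the
  path from the root produces the terms n - N_{rw}.
*)

theory Submission
  imports Defs
begin

section \<open>Characteristic polynomials of matrices indexed by finite sets\<close>

definition index_mat :: "('a \<Rightarrow> 'b \<Rightarrow> 'c) \<Rightarrow> 'a list \<Rightarrow> 'b list \<Rightarrow> 'c mat" where
  "index_mat f xs ys = mat (length xs) (length ys) (\<lambda>(i, j). f (xs ! i) (ys ! j))"

lemma index_mat_carrier [simp]: "index_mat f xs ys \<in> carrier_mat (length xs) (length ys)"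
  and dim_row_index_mat [simp]: "dim_row (index_mat f xs ys) = length xs"
  and dim_col_index_mat [simp]: "dim_col (index_mat f xs ys) = length ys"
  by (auto simp: index_mat_def)

lemma index_mat_nth [simp]:
  "i < length xs \<Longrightarrow> j < length ys \<Longrightarrow> index_mat f xs ys $$ (i, j) = f (xs ! i) (ys ! j)"
  by (simp add: index_mat_def)

lemma index_mat_cong:
  "(\<And>x y. x \<in> set xs \<Longrightarrow> y \<in> set ys \<Longrightarrow> f x y = g x y) \<Longrightarrow> index_mat f xs ys = index_mat g xs ys"
  by (rule eq_matI) auto

lemma index_mat_mult:
  fixes f g :: "'a \<Rightarrow> 'a \<Rightarrow> 'b::comm_semiring_0"
  assumes "distinct ys"
  shows "index_mat f xs ys * index_mat g ys zs = index_mat (\<lambda>x z. \<Sum>y\<in>set ys. f x y * g y z) xs zs"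
proof (rule eq_matI)
  fix i j assume "i < dim_row (index_mat (\<lambda>x z. \<Sum>y\<in>set ys. f x y * g y z) xs zs)"
    and "j < dim_col (index_mat (\<lambda>x z. \<Sum>y\<in>set ys. f x y * g y z) xs zs)"
  then show "(index_mat f xs ys * index_mat g ys zs) $$ (i, j) =
      index_mat (\<lambda>x z. \<Sum>y\<in>set ys. f x y * g y z) xs zs $$ (i, j)"
    using assms by (simp add: scalar_prod_def sum.distinct_set_conv_list sum_list_sum_nth atLeast0LessThan)
qed auto

lemma index_mat_delta:
  "distinct xs \<Longrightarrow> index_mat (\<lambda>x y. if x = y then 1 else 0) xs xs = 1\<^sub>m (length xs)"
  by (rule eq_matI) (auto simp: nth_eq_iff_index_eq)

lemma index_mat_append:
  "index_mat f (xs @ ys) (xs @ ys) =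
     four_block_mat (index_mat f xs xs) (index_mat f xs ys) (index_mat f ys xs) (index_mat f ys ys)"
  by (rule eq_matI) (auto simp: nth_append)

lemma char_poly_index_mat_similar:
  fixes f g p q :: "'a \<Rightarrow> 'a \<Rightarrow> 'b::comm_ring_1"
  assumes xs: "distinct xs" and ys: "distinct ys" and set_eq: "set xs = set ys"
    and pq: "\<And>x y. x \<in> set xs \<Longrightarrow> y \<in> set xs \<Longrightarrow>
                (\<Sum>z\<in>set xs. p x z * q z y) = (if x = y then 1 else 0)"
    and qp: "\<And>x y. x \<in> set xs \<Longrightarrow> y \<in> set xs \<Longrightarrow>
                (\<Sum>z\<in>set xs. q x z * p z y) = (if x = y then 1 else 0)"
    and intertwine: "\<And>x y. x \<in> set xs \<Longrightarrow> y \<in> set xs \<Longrightarrow>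
                (\<Sum>z\<in>set xs. p x z * g z y) = (\<Sum>z\<in>set xs. f x z * p z y)"
  shows "char_poly (index_mat f xs xs) = char_poly (index_mat g ys ys)"
proof -
  let ?P = "index_mat p xs ys" and ?Q = "index_mat q ys xs"
  have len: "length ys = length xs"
    using xs ys set_eq by (metis distinct_card)
  have PQ: "?P * ?Q = 1\<^sub>m (length xs)"
    unfolding index_mat_mult[OF ys] index_mat_delta[OF xs, symmetric]
    using pq set_eq by (intro index_mat_cong) auto
  have QP: "?Q * ?P = 1\<^sub>m (length xs)"
    unfolding index_mat_mult[OF xs] len[symmetric] index_mat_delta[OF ys, symmetric]
    using qp set_eq by (intro index_mat_cong) auto
  have AP: "index_mat f xs xs * ?P = ?P * index_mat g ys ys"
    unfolding index_mat_mult[OF xs] index_mat_mult[OF ys]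
    using intertwine set_eq by (intro index_mat_cong) auto
  have "index_mat f xs xs = index_mat f xs xs * (?P * ?Q)"
    using PQ by simp
  also have "\<dots> = (index_mat f xs xs * ?P) * ?Q"
    using len by (intro assoc_mult_mat[symmetric]) auto
  also have "\<dots> = ?P * index_mat g ys ys * ?Q"
    unfolding AP ..
  finally have "similar_mat (index_mat f xs xs) (index_mat g ys ys)"
    using PQ QP len by (intro similar_matI[where P = ?P and Q = ?Q and n = "length xs"]) auto
  then show ?thesis
    by (rule char_poly_similar)
qed

lemma sum_delta_mult_left:
  fixes g :: "'a \<Rightarrow> 'b::semiring_0"
  shows "finite V \<Longrightarrow> (\<Sum>z\<in>V. (if x = z then a z else 0) * g z) = (if x \<in> V then a x * g x else 0)"
  by (simp add: if_distrib[of "\<lambda>u. u * _"] sum.delta cong: if_cong)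

lemma sum_delta_mult_right:
  fixes g :: "'a \<Rightarrow> 'b::semiring_0"
  shows "finite V \<Longrightarrow> (\<Sum>z\<in>V. g z * (if z = y then b z else 0)) = (if y \<in> V then g y * b y else 0)"
  by (simp add: if_distrib sum.delta' cong: if_cong)

text \<open>The order on \<^typ>\<open>'a\<close> only fixes an enumeration of \<open>V\<close>; by
  \<open>char_poly_on_list\<close> any other enumeration gives the same polynomial.\<close>
definition char_poly_on :: "('a::linorder \<Rightarrow> 'a \<Rightarrow> 'b::comm_ring_1) \<Rightarrow> 'a set \<Rightarrow> 'b poly" where
  "char_poly_on f V = char_poly (index_mat f (sorted_list_of_set V) (sorted_list_of_set V))"

lemma char_poly_on_similar:
  fixes f g p q :: "'a::linorder \<Rightarrow> 'a \<Rightarrow> 'b::comm_ring_1"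
  assumes "finite V"
    and "\<And>x y. x \<in> V \<Longrightarrow> y \<in> V \<Longrightarrow> (\<Sum>z\<in>V. p x z * q z y) = (if x = y then 1 else 0)"
    and "\<And>x y. x \<in> V \<Longrightarrow> y \<in> V \<Longrightarrow> (\<Sum>z\<in>V. q x z * p z y) = (if x = y then 1 else 0)"
    and "\<And>x y. x \<in> V \<Longrightarrow> y \<in> V \<Longrightarrow> (\<Sum>z\<in>V. p x z * g z y) = (\<Sum>z\<in>V. f x z * p z y)"
  shows "char_poly_on f V = char_poly_on g V"
  unfolding char_poly_on_def using assms by (intro char_poly_index_mat_similar[where p = p and q = q]) auto

lemma char_poly_on_list:
  assumes "distinct xs" and "set xs = V"
  shows "char_poly_on f V = char_poly (index_mat f xs xs)"
  unfolding char_poly_on_def using assms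
  by (intro char_poly_index_mat_similar[where p = "\<lambda>x y. if x = y then 1 else 0"
        and q = "\<lambda>x y. if x = y then 1 else 0"]) (auto simp: sum_delta_mult_left sum_delta_mult_right)

lemma char_poly_on_cong:
  "finite V \<Longrightarrow> (\<And>x y. x \<in> V \<Longrightarrow> y \<in> V \<Longrightarrow> f x y = g x y) \<Longrightarrow> char_poly_on f V = char_poly_on g V"
  unfolding char_poly_on_def by (subst index_mat_cong[of _ _ f g]) auto

lemma char_poly_on_reindex:
  assumes "inj_on h I" and "finite I"
  shows "char_poly_on f (h ` I) = char_poly_on (\<lambda>i j. f (h i) (h j)) I"
proof -
  let ?is = "sorted_list_of_set I"
  have "char_poly_on f (h ` I) = char_poly (index_mat f (map h ?is) (map h ?is))"
    using assms by (intro char_poly_on_list) (auto simp: distinct_map)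
  also have "index_mat f (map h ?is) (map h ?is) = index_mat (\<lambda>i j. f (h i) (h j)) ?is ?is"
    by (rule eq_matI) auto
  finally show ?thesis
    by (simp add: char_poly_on_def)
qed

lemma char_poly_on_diag_scale:
  fixes f :: "'a::linorder \<Rightarrow> 'a \<Rightarrow> 'b::field"
  assumes "finite V" and nz: "\<And>x. x \<in> V \<Longrightarrow> d x \<noteq> 0"
  shows "char_poly_on (\<lambda>x y. d x * f x y / d y) V = char_poly_on f V"
proof (rule char_poly_on_similar[where p = "\<lambda>x y. if x = y then d x else 0"
      and q = "\<lambda>x y. if x = y then 1 / d x else 0"])
  fix x y assume "x \<in> V" and y: "y \<in> V"
  have "(\<Sum>z\<in>V. d x * f x z / d z * (if z = y then d z else 0)) = d x * f x y / d y * d y"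
    using assms y by (subst sum_delta_mult_right) auto
  then show "(\<Sum>z\<in>V. (if x = z then d x else 0) * f z y) =
      (\<Sum>z\<in>V. d x * f x z / d z * (if z = y then d z else 0))"
    using assms y \<open>x \<in> V\<close> nz[OF y] by (simp add: sum_delta_mult_left)
qed (use assms in \<open>auto simp: sum_delta_mult_left\<close>)

lemma char_poly_four_block_lower_zero:
  fixes A :: "'b::idom mat"
  assumes "A \<in> carrier_mat n n" and "B \<in> carrier_mat n m" and "D \<in> carrier_mat m m"
  shows "char_poly (four_block_mat A B (0\<^sub>m m n) D) = char_poly A * char_poly D"
proof -
  let ?cm = "\<lambda>A. [:0, 1:] \<cdot>\<^sub>m 1\<^sub>m (dim_row A) + map_mat (\<lambda>a. [:- a:]) A"
  have "?cm (four_block_mat A B (0\<^sub>m m n) D) =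
      four_block_mat (?cm A) (map_mat (\<lambda>a. [:- a:]) B) (0\<^sub>m m n) (?cm D)"
    using assms by (intro eq_matI) (auto simp: one_poly_def)
  moreover have "det \<dots> = det (?cm A) * det (?cm D)"
    using assms by (intro det_four_block_mat_lower_left_zero[OF _ _ refl]) auto
  ultimately show ?thesis
    using assms by (simp add: char_poly_defs)
qed

lemma char_poly_on_block_triangular:
  fixes f :: "'a::linorder \<Rightarrow> 'a \<Rightarrow> 'b::idom"
  assumes "finite U" and "finite W" and "U \<inter> W = {}"
    and zero: "\<And>x y. x \<in> W \<Longrightarrow> y \<in> U \<Longrightarrow> f x y = 0"
  shows "char_poly_on f (U \<union> W) = char_poly_on f U * char_poly_on f W"
proof -
  let ?us = "sorted_list_of_set U" and ?ws = "sorted_list_of_set W"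
  have "char_poly_on f (U \<union> W) = char_poly (index_mat f (?us @ ?ws) (?us @ ?ws))"
    using assms by (intro char_poly_on_list) auto
  also have "index_mat f (?us @ ?ws) (?us @ ?ws) =
      four_block_mat (index_mat f ?us ?us) (index_mat f ?us ?ws) (0\<^sub>m (length ?ws) (length ?us))
        (index_mat f ?ws ?ws)"
  proof -
    have mem: "sorted_list_of_set X ! k \<in> X" if "finite X" and "k < card X" for X :: "'a set" and k
      using that by (metis nth_mem set_sorted_list_of_set length_sorted_list_of_set)
    show ?thesis
      unfolding index_mat_append using assms by (intro cong_four_block_mat eq_matI) (auto intro!: zero mem)
  qed
  also have "char_poly \<dots> = char_poly_on f U * char_poly_on f W"
    unfolding char_poly_on_def by (intro char_poly_four_block_lower_zero) auto
  finally show ?thesis .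
qed

lemma char_poly_on_empty [simp]: "char_poly_on f {} = 1"
proof -
  have "char_poly_matrix (index_mat f [] []) = 1\<^sub>m 0"
    by (rule eq_matI) (auto simp: char_poly_matrix_def)
  then show ?thesis
    by (simp add: char_poly_on_def char_poly_def)
qed

lemma char_poly_on_singleton: "char_poly_on f {c} = [:- f c c, 1:]"
  unfolding char_poly_on_def char_poly_defs by (subst det_single) auto

lemma char_poly_on_UN_block_diagonal:
  fixes f :: "'a::linorder \<Rightarrow> 'a \<Rightarrow> 'b::idom"
  assumes "finite I" and "\<And>i. i \<in> I \<Longrightarrow> finite (U i)" and "disjoint_family_on U I"
    and "\<And>i j x y. i \<in> I \<Longrightarrow> j \<in> I \<Longrightarrow> i \<noteq> j \<Longrightarrow> x \<in> U i \<Longrightarrow> y \<in> U j \<Longrightarrow> f x y = 0"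
  shows "char_poly_on f (\<Union>i\<in>I. U i) = (\<Prod>i\<in>I. char_poly_on f (U i))"
  using assms
proof (induction I rule: finite_induct)
  case (insert i I)
  have "char_poly_on f (U i \<union> (\<Union>j\<in>I. U j)) = char_poly_on f (U i) * char_poly_on f (\<Union>j\<in>I. U j)"
  proof (rule char_poly_on_block_triangular)
    show "f x y = 0" if "x \<in> (\<Union>j\<in>I. U j)" and "y \<in> U i" for x y
      using that insert.hyps(2) insert.prems(3) by blast
  qed (use insert in \<open>auto simp: disjoint_family_on_def\<close>)
  moreover have "char_poly_on f (\<Union>j\<in>I. U j) = (\<Prod>j\<in>I. char_poly_on f (U j))"
    using insert.prems(1,2) by (intro insert.IH) (auto simp: disjoint_family_on_def intro: insert.prems(3))
  ultimately show ?case
    using insert.hyps by simp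
qed simp

lemma degree_char_poly_on:
  "finite V \<Longrightarrow> degree (char_poly_on f V) = card V"
  unfolding char_poly_on_def by (subst degree_monic_char_poly[of _ "card V"]) auto

lemma char_poly_on_shift:
  "char_poly_on (\<lambda>x y. f x y + (if x = y then a else 0)) V = char_poly_on f V \<circ>\<^sub>p [:- a, 1:]"
proof -
  let ?vs = "sorted_list_of_set V"
  have hom: "comm_ring_hom (\<lambda>p. p \<circ>\<^sub>p [:- a, 1:])"
    by unfold_locales (auto simp: pcompose_add pcompose_mult pcompose_1)
  have "map_mat (\<lambda>p. p \<circ>\<^sub>p [:- a, 1:]) (char_poly_matrix (index_mat f ?vs ?vs)) =
      char_poly_matrix (index_mat (\<lambda>x y. f x y + (if x = y then a else 0)) ?vs ?vs)"
    by (rule eq_matI) (auto simp: char_poly_matrix_def pcompose_pCons nth_eq_iff_index_eq)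
  then show ?thesis
    unfolding char_poly_on_def char_poly_def by (metis comm_ring_hom.hom_det[OF hom])
qed

lemma char_poly_on_reflect:
  assumes "finite V"
  shows "char_poly_on (\<lambda>x y. (if x = y then a else 0) - f x y) V =
    (- 1) ^ card V * (char_poly_on f V \<circ>\<^sub>p [:a, - 1:])"
proof -
  let ?vs = "sorted_list_of_set V"
  let ?M = "char_poly_matrix (index_mat (\<lambda>x y. (if x = y then a else 0) - f x y) ?vs ?vs)"
  have hom: "comm_ring_hom (\<lambda>p. p \<circ>\<^sub>p [:a, - 1:])"
    by unfold_locales (auto simp: pcompose_add pcompose_mult pcompose_1)
  have "map_mat (\<lambda>p. p \<circ>\<^sub>p [:a, - 1:]) (char_poly_matrix (index_mat f ?vs ?vs)) = (- 1) \<cdot>\<^sub>m ?M"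
    by (rule eq_matI) (auto simp: char_poly_matrix_def pcompose_pCons nth_eq_iff_index_eq)
  then have "char_poly_on f V \<circ>\<^sub>p [:a, - 1:] = det ((- 1) \<cdot>\<^sub>m ?M)"
    unfolding char_poly_on_def char_poly_def by (metis comm_ring_hom.hom_det[OF hom])
  also have "\<dots> = (- 1) ^ card V * char_poly_on (\<lambda>x y. (if x = y then a else 0) - f x y) V"
    using assms by (simp add: char_poly_on_def char_poly_def char_poly_matrix_def)
  finally show ?thesis
    by (simp flip: power_add mult.assoc)
qed

lemma char_poly_on_fibre_similar:
  fixes f :: "'a::linorder \<Rightarrow> 'a \<Rightarrow> 'b::comm_ring_1"
  assumes fin: "finite V" and FV: "F \<subseteq> V"
    and r: "\<And>x. x \<in> V \<Longrightarrow> r x \<in> F" and r_id: "\<And>c. c \<in> F \<Longrightarrow> r c = c"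
  defines "A \<equiv> \<lambda>x y. if y \<in> F then (\<Sum>w | w \<in> V \<and> r w = y. f x w) else f x y"
  shows "char_poly_on f V = char_poly_on (\<lambda>x y. if x \<in> F then A x y else A x y - A (r x) y) V"
proof -
  txt \<open>Conjugate by \<open>P = I + N\<close> with \<open>N x (r x) = 1\<close> for \<open>x \<notin> F\<close>. Since \<open>r\<close> maps
    into \<open>F\<close>, \<open>N\<^sup>2 = 0\<close> and \<open>P\<^sup>-\<^sup>1 = I - N\<close>; right multiplication by \<open>P\<close> adds each fibre
    to the column of its representative, left multiplication by \<open>P\<^sup>-\<^sup>1\<close> subtracts the row
    of \<open>r x\<close> from row \<open>x\<close>.\<close>
  define N :: "'a \<Rightarrow> 'a \<Rightarrow> 'b" where "N x z = (if x \<notin> F \<and> z = r x then 1 else 0)" for x z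
  define \<delta> :: "'a \<Rightarrow> 'a \<Rightarrow> 'b" where "\<delta> x z = (if x = z then 1 else 0)" for x z
  have rV: "r x \<in> V" if "x \<in> V" for x
    using r FV that by blast
  have row: "(\<Sum>z\<in>V. (\<delta> x z + s * N x z) * h z) = h x + s * (if x \<notin> F then h (r x) else 0)"
    if "x \<in> V" for x s h
  proof -
    have "(\<Sum>z\<in>V. (\<delta> x z + s * N x z) * h z) =
        (\<Sum>z\<in>V. if z = x then h z else 0) + (\<Sum>z\<in>V. if x \<notin> F \<and> z = r x then s * h z else 0)"
      unfolding sum.distrib[symmetric] by (rule sum.cong) (auto simp: \<delta>_def N_def algebra_simps)
    then show ?thesis
      using fin that rV[OF that] by (cases "x \<in> F") (simp_all add: sum.delta')
  qed
  have col: "(\<Sum>z\<in>V. f x z * (\<delta> z y + N z y)) = A x y" if "y \<in> V" for x y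
  proof -
    have "(\<Sum>z\<in>V. f x z * (\<delta> z y + N z y)) =
        (\<Sum>z\<in>V. if z = y then f x z else 0) + (\<Sum>z\<in>V. if z \<notin> F \<and> r z = y then f x z else 0)"
      unfolding sum.distrib[symmetric] by (rule sum.cong) (auto simp: \<delta>_def N_def)
    also have "\<dots> = f x y + (\<Sum>z | z \<in> V \<and> z \<notin> F \<and> r z = y. f x z)"
      using fin that by (simp add: sum.delta' sum.inter_filter)
    also have "\<dots> = A x y"
    proof (cases "y \<in> F")
      case True
      then have "{w. w \<in> V \<and> r w = y} = insert y {z. z \<in> V \<and> z \<notin> F \<and> r z = y}"
        using that r_id by auto
      then show ?thesis
        using True fin by (simp add: A_def)
    next
      case False
      then have empty: "{z. z \<in> V \<and> z \<notin> F \<and> r z = y} = {}"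
        using r by auto
      show ?thesis
        using False by (simp add: A_def empty)
    qed
    finally show ?thesis .
  qed
  show ?thesis
  proof (rule char_poly_on_similar[OF fin, where p = "\<lambda>x z. \<delta> x z + N x z" and q = "\<lambda>x z. \<delta> x z + (- 1) * N x z"])
    fix x y assume x: "x \<in> V" and y: "y \<in> V"
    have Nr: "N (r x) z = 0" for z
      using r[OF x] by (simp add: N_def)
    show "(\<Sum>z\<in>V. (\<delta> x z + N x z) * (\<delta> z y + - 1 * N z y)) = (if x = y then 1 else 0)"
      using row[OF x, of 1] Nr by (auto simp: \<delta>_def N_def)
    show "(\<Sum>z\<in>V. (\<delta> x z + - 1 * N x z) * (\<delta> z y + N z y)) = (if x = y then 1 else 0)"
      using row[OF x, of "- 1"] Nr by (auto simp: \<delta>_def N_def)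
    show "(\<Sum>z\<in>V. (\<delta> x z + N x z) * (if z \<in> F then A z y else A z y - A (r z) y)) =
        (\<Sum>z\<in>V. f x z * (\<delta> z y + N z y))"
      using row[OF x, of 1] col[OF y] r[OF x] by simp
  qed
qed

lemma char_poly_on_equitable:
  fixes f :: "'a::linorder \<Rightarrow> 'a \<Rightarrow> 'b::idom"
  assumes fin: "finite V" and FV: "F \<subseteq> V"
    and r: "\<And>x. x \<in> V \<Longrightarrow> r x \<in> F" and r_id: "\<And>c. c \<in> F \<Longrightarrow> r c = c"
    and equit: "\<And>x y. x \<in> V \<Longrightarrow> y \<in> F \<Longrightarrow>
      (\<Sum>w | w \<in> V \<and> r w = y. f x w) = (\<Sum>w | w \<in> V \<and> r w = y. f (r x) w)"
  shows "char_poly_on f V =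
    char_poly_on (\<lambda>x y. \<Sum>w | w \<in> V \<and> r w = y. f x w) F * char_poly_on (\<lambda>x y. f x y - f (r x) y) (V - F)"
proof -
  define S where "S x y = (\<Sum>w | w \<in> V \<and> r w = y. f x w)" for x y
  define A where "A x y = (if y \<in> F then S x y else f x y)" for x y
  define B where "B x y = (if x \<in> F then A x y else A x y - A (r x) y)" for x y
  have "char_poly_on f V = char_poly_on B V"
    unfolding B_def A_def S_def using fin FV r r_id by (rule char_poly_on_fibre_similar)
  also have "\<dots> = char_poly_on B F * char_poly_on B (V - F)"
  proof -
    have "B x y = 0" if "x \<in> V - F" and "y \<in> F" for x y
      using that equit[of x y] r_id[OF r, of x] by (simp add: B_def A_def S_def)
    then have "char_poly_on B (F \<union> (V - F)) = char_poly_on B F * char_poly_on B (V - F)"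
      using fin FV by (intro char_poly_on_block_triangular) (auto intro: finite_subset)
    then show ?thesis
      using FV by (simp add: Un_absorb1)
  qed
  also have "char_poly_on B F = char_poly_on S F"
    using fin FV by (intro char_poly_on_cong) (auto simp: B_def A_def intro: finite_subset)
  also have "char_poly_on B (V - F) = char_poly_on (\<lambda>x y. f x y - f (r x) y) (V - F)"
    using fin r by (intro char_poly_on_cong) (auto simp: B_def A_def)
  finally show ?thesis
    by (simp add: S_def)
qed

lemma char_poly_on_deflate:
  fixes f :: "'a::linorder \<Rightarrow> 'a \<Rightarrow> 'b::idom"
  assumes "finite V" and "c \<in> V" and row_sum: "\<And>x. x \<in> V \<Longrightarrow> (\<Sum>y\<in>V. f x y) = \<beta>"
  shows "char_poly_on f V = [:- \<beta>, 1:] * char_poly_on (\<lambda>x y. f x y - f c y) (V - {c})"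
proof -
  have "char_poly_on f V =
      char_poly_on (\<lambda>x y. \<Sum>w | w \<in> V \<and> c = y. f x w) {c} * char_poly_on (\<lambda>x y. f x y - f c y) (V - {c})"
    using assms by (intro char_poly_on_equitable[where r = "\<lambda>_. c"]) auto
  then show ?thesis
    using row_sum[OF \<open>c \<in> V\<close>] by (simp add: char_poly_on_singleton)
qed

section \<open>Polynomials with prescribed roots\<close>

definition root_poly :: "'a::comm_ring_1 multiset \<Rightarrow> 'a poly" where
  "root_poly \<sigma> = (\<Prod>x\<in>#\<sigma>. [:- x, 1:])"

lemma root_poly_empty [simp]: "root_poly {#} = 1"
  and root_poly_add_mset [simp]: "root_poly (add_mset x \<sigma>) = [:- x, 1:] * root_poly \<sigma>"
  and root_poly_union: "root_poly (\<sigma> + \<tau>) = root_poly \<sigma> * root_poly \<tau>"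
  by (simp_all add: root_poly_def)

lemma root_poly_sum: "root_poly (\<Sum>i\<in>I. \<sigma> i) = (\<Prod>i\<in>I. root_poly (\<sigma> i))"
  by (induction I rule: infinite_finite_induct) (simp_all add: root_poly_union)

lemma root_poly_pcompose_shift:
  "root_poly \<sigma> \<circ>\<^sub>p [:- a, 1:] = root_poly (image_mset (\<lambda>x. x + a) \<sigma>)"
proof -
  have linear: "[:- x, 1:] \<circ>\<^sub>p [:- a, 1:] = [:- (x + a), 1:]" for x
    by (simp add: pcompose_pCons one_pCons)
  show ?thesis
    by (induction \<sigma>) (simp_all only: root_poly_empty root_poly_add_mset image_mset_add_mset
        image_mset_empty pcompose_mult linear pcompose_1)
qed

lemma root_poly_pcompose_reflect:
  "root_poly \<sigma> \<circ>\<^sub>p [:a, - 1:] = (- 1) ^ size \<sigma> * root_poly (image_mset (\<lambda>x. a - x) \<sigma>)"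
proof -
  have linear: "[:- x, 1:] \<circ>\<^sub>p [:a, - 1:] = - [:- (a - x), 1:]" for x
    by (simp add: pcompose_pCons one_pCons)
  show ?thesis
  proof (induction \<sigma>)
    case (add x \<sigma>)
    have "root_poly (add_mset x \<sigma>) \<circ>\<^sub>p [:a, - 1:] = ([:- x, 1:] \<circ>\<^sub>p [:a, - 1:]) * (root_poly \<sigma> \<circ>\<^sub>p [:a, - 1:])"
      by (simp only: root_poly_add_mset pcompose_mult)
    also have "\<dots> = - [:- (a - x), 1:] * ((- 1) ^ size \<sigma> * root_poly (image_mset (\<lambda>x. a - x) \<sigma>))"
      by (simp only: linear add.IH)
    also have "\<dots> = (- 1) ^ size (add_mset x \<sigma>) * root_poly (image_mset (\<lambda>x. a - x) (add_mset x \<sigma>))"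
      unfolding root_poly_add_mset image_mset_add_mset size_add_mset power_Suc
      by (simp only: mult_minus_left mult_minus_right mult_minus1 mult_1_left mult.left_commute)
    finally show ?case .
  qed simp
qed

lemma root_poly_nonzero [simp]: "root_poly \<sigma> \<noteq> (0 :: 'a::idom poly)"
  by (induction \<sigma>) (simp_all del: mult_pCons_left)

lemma degree_root_poly: "degree (root_poly (\<sigma> :: 'a::idom multiset)) = size \<sigma>"
  by (induction \<sigma>) (simp_all add: degree_mult_eq del: mult_pCons_left)

lemma proots_root_poly [simp]: "proots (root_poly (\<sigma> :: 'a::idom multiset)) = \<sigma>"
  by (induction \<sigma>) (simp_all add: proots_mult del: mult_pCons_left)

lemma poly_root_poly_eq_0: "poly (root_poly \<sigma>) x = (0::'a::idom) \<longleftrightarrow> x \<in># \<sigma>"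
  by (induction \<sigma>) auto

lemma mspec_eqI: "char_poly A = root_poly \<sigma> \<Longrightarrow> mspec A = \<sigma>"
  unfolding mspec_def root_poly_def[symmetric] by (rule the_equality) (auto dest: arg_cong[of _ _ proots])

lemma char_poly_on_shift_roots:
  "char_poly_on f V = root_poly \<sigma> \<Longrightarrow>
    char_poly_on (\<lambda>x y. f x y + (if x = y then a else 0)) V = root_poly (image_mset (\<lambda>x. x + a) \<sigma>)"
  by (simp add: char_poly_on_shift root_poly_pcompose_shift)

lemma char_poly_on_reflect_roots:
  fixes f :: "'a::linorder \<Rightarrow> 'a \<Rightarrow> 'b::idom"
  assumes "finite V" and "char_poly_on f V = root_poly \<sigma>"
  shows "char_poly_on (\<lambda>x y. (if x = y then a else 0) - f x y) V = root_poly (image_mset (\<lambda>x. a - x) \<sigma>)"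
proof -
  have "size \<sigma> = card V"
    using degree_char_poly_on[OF assms(1), of f] assms(2) by (simp add: degree_root_poly)
  moreover have "(- 1) ^ k * (- 1) ^ k = (1 :: 'b poly)" for k
    by (simp flip: power_add)
  ultimately show ?thesis
    using assms by (simp add: char_poly_on_reflect root_poly_pcompose_reflect flip: mult.assoc)
qed

lemma char_poly_on_deflate_roots:
  fixes f :: "'a::linorder \<Rightarrow> 'a \<Rightarrow> 'b::idom"
  assumes "finite V" and "c \<in> V" and "\<And>x. x \<in> V \<Longrightarrow> (\<Sum>y\<in>V. f x y) = 0"
    and "char_poly_on f V = root_poly (add_mset 0 \<sigma>)"
  shows "char_poly_on (\<lambda>x y. f x y - f c y) (V - {c}) = root_poly \<sigma>"
proof -
  have "[:0, 1:] * char_poly_on (\<lambda>x y. f x y - f c y) (V - {c}) = [:0, 1:] * root_poly \<sigma>"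
    using char_poly_on_deflate[OF assms(1-3)] assms(4) by simp
  then show ?thesis
    by (subst (asm) mult_cancel_left) simp
qed

lemma real_symmetric_eigenvalue_real:
  fixes A :: "real mat"
  assumes A: "A \<in> carrier_mat n n" and sym: "\<And>i j. i < n \<Longrightarrow> j < n \<Longrightarrow> A $$ (i, j) = A $$ (j, i)"
    and "eigenvector (map_mat complex_of_real A) v a"
  shows "a \<in> \<real>"
proof -
  let ?A = "map_mat complex_of_real A"
  have v: "v \<in> carrier_vec n" "v \<noteq> 0\<^sub>v n" and eig: "?A *\<^sub>v v = a \<cdot>\<^sub>v v"
    using assms(3) A unfolding eigenvector_def by auto
  have "conjugate (?A *\<^sub>v v) = ?A *\<^sub>v conjugate v"
    using A v by (intro eq_vecI) (auto simp: mult_mat_vec_def scalar_prod_def sum_conjugate)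
  moreover have "transpose_mat ?A = ?A"
    using A sym by (intro eq_matI) auto
  ultimately have "v \<bullet>c (?A *\<^sub>v v) = (?A *\<^sub>v v) \<bullet>c v"
    using A v transpose_vec_mult_scalar[of ?A n n "conjugate v" v] by (simp add: comm_scalar_prod[of _ n])
  then have "cnj a * (v \<bullet>c v) = a * (v \<bullet>c v)"
    using v by (simp add: eig conjugate_smult_vec)
  moreover have "v \<bullet>c v \<noteq> 0"
    using v by simp
  ultimately show ?thesis
    by (simp add: Reals_cnj_iff)
qed

lemma map_poly_of_real_root_poly:
  "map_poly complex_of_real (root_poly \<sigma>) = root_poly (image_mset complex_of_real \<sigma>)"
proof -
  interpret of_real_poly: map_poly_inj_idom_hom complex_of_real ..
  show ?thesis
    by (induction \<sigma>) (simp_all add: of_real_poly.hom_mult del: mult_pCons_left)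
qed

lemma char_poly_real_symmetric:
  fixes A :: "real mat"
  assumes A: "A \<in> carrier_mat n n" and sym: "\<And>i j. i < n \<Longrightarrow> j < n \<Longrightarrow> A $$ (i, j) = A $$ (j, i)"
  shows "\<exists>\<sigma>. char_poly A = root_poly \<sigma>"
proof -
  interpret of_real_poly: map_poly_inj_idom_hom complex_of_real ..
  let ?A = "map_mat complex_of_real A"
  obtain as where "char_poly ?A = (\<Prod>a\<leftarrow>as. [:- a, 1:])"
    using char_poly_factorized[of ?A n] A by auto
  then have factor: "char_poly ?A = root_poly (mset as)"
    by (simp add: root_poly_def flip: prod_mset_prod_list)
  have "a \<in> \<real>" if "a \<in> set as" for a
  proof -
    have "poly (char_poly ?A) a = 0"
      using that by (simp add: factor poly_root_poly_eq_0)
    then have "eigenvalue ?A a"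
      using A by (simp add: eigenvalue_root_char_poly)
    then show ?thesis
      using real_symmetric_eigenvalue_real[OF A sym] by (auto simp: eigenvalue_def)
  qed
  then have real: "mset as = image_mset of_real (mset (map Re as))"
    by (induction as) auto
  have "map_poly of_real (char_poly A) = char_poly ?A"
    by (rule of_real_hom.char_poly_hom[OF A, symmetric])
  also have "\<dots> = map_poly of_real (root_poly (mset (map Re as)))"
    unfolding factor real by (rule map_poly_of_real_root_poly[symmetric])
  finally show ?thesis
    by (auto simp only: of_real_poly.eq_iff)
qed

section \<open>Laplacians and complements\<close>

definition laplacian :: "('a \<times> 'a) set \<Rightarrow> 'a set \<Rightarrow> 'a \<Rightarrow> 'a \<Rightarrow> real" where
  "laplacian E V x y =
    (if x = y then real (card {z \<in> V. (x, z) \<in> E}) else if (x, y) \<in> E then - 1 else 0)"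

lemma laplacian_mat_eq_index_mat:
  assumes "distinct vs"
  shows "laplacian_mat vs E = index_mat (laplacian E (set vs)) vs vs"
proof -
  have "card {k. k < length vs \<and> (x, vs ! k) \<in> E} = card {z \<in> set vs. (x, z) \<in> E}" for x
  proof -
    have "{z \<in> set vs. (x, z) \<in> E} = (\<lambda>k. vs ! k) ` {k. k < length vs \<and> (x, vs ! k) \<in> E}"
      by (auto simp: in_set_conv_nth)
    moreover have "inj_on (\<lambda>k. vs ! k) {k. k < length vs \<and> (x, vs ! k) \<in> E}"
      using assms by (auto simp: inj_on_def nth_eq_iff_index_eq)
    ultimately show ?thesis
      by (simp add: card_image)
  qed
  then show ?thesis
    using assms by (intro eq_matI) (auto simp: laplacian_mat_def laplacian_def nth_eq_iff_index_eq)
qed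

lemma laplacian_row_sum:
  assumes "finite V" and "x \<in> V" and "(x, x) \<notin> E"
  shows "(\<Sum>y\<in>V. laplacian E V x y) = 0"
proof -
  have "(\<Sum>y\<in>V - {x}. laplacian E V x y) = (\<Sum>y\<in>V - {x}. if (x, y) \<in> E then - 1 else 0)"
    by (rule sum.cong) (auto simp: laplacian_def)
  also have "\<dots> = - real (card {z \<in> V - {x}. (x, z) \<in> E})"
    using assms by (simp add: sum.inter_filter[symmetric])
  also have "{z \<in> V - {x}. (x, z) \<in> E} = {z \<in> V. (x, z) \<in> E}"
    using assms by auto
  finally show ?thesis
    using assms by (simp add: sum.remove laplacian_def)
qed

lemma laplacian_compl_edges:
  assumes "distinct vs" and "x \<in> set vs" and "y \<in> set vs" and "(x, x) \<notin> E"
  shows "laplacian (compl_edges vs E) (set vs) x y =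
    (if x = y then real (length vs) else 0) - 1 - laplacian E (set vs) x y"
proof (cases "x = y")
  case True
  have "{z \<in> set vs. (x, z) \<in> compl_edges vs E} = (set vs - {x}) - {z \<in> set vs. (x, z) \<in> E}"
    using assms by (auto simp: compl_edges_def)
  moreover have "{z \<in> set vs. (x, z) \<in> E} \<subseteq> set vs - {x}"
    using assms by auto
  ultimately have "card {z \<in> set vs. (x, z) \<in> compl_edges vs E} =
      (length vs - 1) - card {z \<in> set vs. (x, z) \<in> E}"
    using assms by (simp add: card_Diff_subset distinct_card)
  moreover have "card {z \<in> set vs. (x, z) \<in> E} \<le> length vs - 1"
    using card_mono[OF _ \<open>{z \<in> set vs. (x, z) \<in> E} \<subseteq> set vs - {x}\<close>] assms
    by (simp add: distinct_card)
  moreover have "length vs \<ge> 1"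
    using assms by (cases vs) auto
  ultimately show ?thesis
    using True by (simp add: laplacian_def of_nat_diff)
qed (use assms in \<open>auto simp: laplacian_def compl_edges_def\<close>)

lemma char_poly_laplacian_compl_edges:
  assumes vs: "distinct vs" "vs \<noteq> []" and irrefl: "\<And>x. x \<in> set vs \<Longrightarrow> (x, x) \<notin> E"
    and spec: "char_poly_on (laplacian E (set vs)) (set vs) = root_poly (add_mset 0 \<mu>)"
  shows "char_poly_on (laplacian (compl_edges vs E) (set vs)) (set vs) =
    root_poly (add_mset 0 (image_mset (\<lambda>x. real (length vs) - x) \<mu>))"
proof -
  let ?V = "set vs" and ?L = "laplacian E (set vs)" and ?Lc = "laplacian (compl_edges vs E) (set vs)"
  define c where "c = hd vs"
  have c: "c \<in> ?V"
    using vs by (simp add: c_def)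
  have "char_poly_on ?Lc ?V = [:- 0, 1:] * char_poly_on (\<lambda>x y. ?Lc x y - ?Lc c y) (?V - {c})"
    using c by (intro char_poly_on_deflate laplacian_row_sum) (auto simp: compl_edges_def)
  also have "char_poly_on (\<lambda>x y. ?Lc x y - ?Lc c y) (?V - {c}) =
      char_poly_on (\<lambda>x y. (if x = y then real (length vs) else 0) - (?L x y - ?L c y)) (?V - {c})"
    using vs c irrefl by (intro char_poly_on_cong) (auto simp: laplacian_compl_edges)
  also have "\<dots> = root_poly (image_mset (\<lambda>x. real (length vs) - x) \<mu>)"
    using c irrefl spec by (intro char_poly_on_reflect_roots char_poly_on_deflate_roots laplacian_row_sum) auto
  finally show ?thesis
    by simp
qed

section \<open>The Laplacian of a generalized composition\<close>

lemma distinct_concat_nth_disjoint: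
  assumes "distinct (concat xs)" and "i < length xs" and "j < length xs" and "i \<noteq> j"
  shows "set (xs ! i) \<inter> set (xs ! j) = {}"
  using assms
proof (induction xs arbitrary: i j)
  case (Cons a xs)
  have sub: "set (xs ! k) \<subseteq> set (concat xs)" if "k < length xs" for k
    using that by (auto dest: nth_mem)
  have "set a \<inter> set (concat xs) = {}" and "distinct (concat xs)"
    using Cons.prems(1) by simp_all
  then show ?case
    using Cons.IH[of "i - 1" "j - 1"] Cons.prems(2-4) sub[of "i - 1"] sub[of "j - 1"]
    by (cases i; cases j) auto
qed simp

lemma leaves_nonempty: "wf_ctree t \<Longrightarrow> leaves t \<noteq> []"
proof (induction t)
  case (Node G ts)
  then obtain t where t: "t \<in> set ts"
    by (cases ts) auto
  then have "leaves t \<noteq> []"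
    using Node.prems by (intro Node.IH) simp_all
  with t show ?case
    by (simp only: leaves.simps concat_eq_Nil_conv set_map) blast
qed simp

lemma comp_edges_subset: "comp_edges t \<subseteq> set (leaves t) \<times> set (leaves t)"
proof (induction t)
  case (Node G ts)
  then show ?case
    by (fastforce simp: nth_mem)
qed simp

lemma comp_edges_irrefl: "wf_ctree t \<Longrightarrow> distinct (leaves t) \<Longrightarrow> (x, x) \<notin> comp_edges t"
proof (induction t)
  case (Node G ts)
  have distinct: "distinct (concat (map leaves ts))"
    using Node.prems by simp
  have "(x, x) \<notin> comp_edges t" if "t \<in> set ts" for t
    using that Node distinct by (simp add: distinct_concat_iff)
  moreover have "i = j" if "i < length ts" "j < length ts"
    "x \<in> set (leaves (ts ! i))" "x \<in> set (leaves (ts ! j))" for i j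
    using that distinct_concat_nth_disjoint[OF distinct, of i j] by auto
  moreover have "(i, i) \<notin> G" for i
    using Node.prems(1) by simp
  ultimately show ?case
    by auto
qed simp

text \<open>The Laplacian spectrum of the composition with one eigenvalue \<open>0\<close> removed, see
  \<open>char_poly_composition_laplacian\<close>.\<close>
function reduced_spectrum :: "'a stree \<Rightarrow> real multiset" where
  "reduced_spectrum (Leaf x) = {#}"
| "reduced_spectrum (Node G ts) = (mspec (qlap G ts) - {#0#}) +
     sum_list (map (\<lambda>(i, t). image_mset (\<lambda>x. x + Nbr G ts i) (reduced_spectrum t)) (zip [0..<length ts] ts))"
  by pat_completeness auto
termination
  by (relation "measure size") (auto dest!: set_zip_rightD simp: le_imp_less_Suc size_list_estimation')

lemma sum_list_map_zip_index:
  "sum_list (map h (zip [0..<length xs] xs)) = (\<Sum>i<length xs. h (i, xs ! i))"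
  by (subst sum_list_sum_nth) (simp add: atLeast0LessThan)

lemma reduced_spectrum_Node:
  "reduced_spectrum (Node G ts) = (mspec (qlap G ts) - {#0#}) +
     (\<Sum>i<length ts. image_mset (\<lambda>x. x + Nbr G ts i) (reduced_spectrum (ts ! i)))"
  by (simp add: sum_list_map_zip_index)

lemma tree_part_eq_reduced_spectrum:
  "tree_part n a t = image_mset (\<lambda>x. real n - a - x) (reduced_spectrum t)"
proof (induction n a t rule: tree_part.induct)
  case (2 n a G ts)
  have IH: "tree_part n (a + Nbr G ts i) (ts ! i) =
      image_mset (\<lambda>x. real n - (a + Nbr G ts i) - x) (reduced_spectrum (ts ! i))"
    if "i < length ts" for i
    using that by (intro "2") (auto simp: in_set_zip intro!: exI[of _ i])
  have "image_mset uminus \<sigma> - {#0#} = image_mset uminus (\<sigma> - {#0 :: real#})" for \<sigma>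
    by (cases "0 \<in># \<sigma>") (auto dest!: multi_member_split simp: diff_single_trivial image_iff)
  then have "phi (real n - a) (neg_ms (mspec (qlap G ts))) =
      image_mset (\<lambda>x. real n - a - x) (mspec (qlap G ts) - {#0#})"
    by (simp add: phi_def neg_ms_def multiset.map_comp comp_def)
  moreover have "(\<Sum>i<length ts. tree_part n (a + Nbr G ts i) (ts ! i)) =
      image_mset (\<lambda>x. real n - a - x) (\<Sum>i<length ts. image_mset (\<lambda>x. x + Nbr G ts i) (reduced_spectrum (ts ! i)))"
    by (simp add: IH flip: sum_comp_morphism[where h = "image_mset _"])
      (simp add: multiset.map_comp comp_def algebra_simps)
  ultimately show ?case
    by (simp add: sum_list_map_zip_index reduced_spectrum_Node del: reduced_spectrum.simps)
qed simp

locale composition_node =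
  fixes G :: "(nat \<times> nat) set" and ts :: "'a::linorder stree list"
  assumes wf: "wf_ctree (Node G ts)" and distinct_leaves: "distinct (leaves (Node G ts))"
begin

abbreviation part :: "nat \<Rightarrow> 'a set" where
  "part i \<equiv> set (leaves (ts ! i))"

abbreviation verts :: "'a set" where
  "verts \<equiv> set (leaves (Node G ts))"

abbreviation lap :: "'a \<Rightarrow> 'a \<Rightarrow> real" where
  "lap \<equiv> laplacian (comp_edges (Node G ts)) verts"

abbreviation part_lap :: "nat \<Rightarrow> 'a \<Rightarrow> 'a \<Rightarrow> real" where
  "part_lap i \<equiv> laplacian (comp_edges (ts ! i)) (part i)"

lemma wf_child: "i < length ts \<Longrightarrow> wf_ctree (ts ! i)"
  using wf by (simp add: nth_mem)

lemma distinct_child: "i < length ts \<Longrightarrow> distinct (leaves (ts ! i))"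
  using distinct_leaves by (simp add: distinct_concat_iff)

lemma sym_G: "sym G" and irrefl_G: "(i, i) \<notin> G"
  using wf by simp_all

lemma parts_disjoint: "i < length ts \<Longrightarrow> j < length ts \<Longrightarrow> i \<noteq> j \<Longrightarrow> part i \<inter> part j = {}"
  using distinct_concat_nth_disjoint[of "map leaves ts" i j] distinct_leaves by simp

lemma verts_eq: "verts = (\<Union>i<length ts. part i)"
proof -
  have "set ts = (\<lambda>i. ts ! i) ` {..<length ts}"
    by (auto simp: in_set_conv_nth)
  then show ?thesis
    by simp
qed

lemma csize_eq_card: "i < length ts \<Longrightarrow> csize ts i = real (card (part i))"
  using distinct_child by (simp add: csize_def distinct_card)

lemma edge_iff:
  assumes i: "i < length ts" and j: "j < length ts" and x: "x \<in> part i" and y: "y \<in> part j"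
  shows "(x, y) \<in> comp_edges (Node G ts) \<longleftrightarrow> (i = j \<and> (x, y) \<in> comp_edges (ts ! i)) \<or> (i, j) \<in> G"
proof
  assume "(x, y) \<in> comp_edges (Node G ts)"
  then consider l where "l < length ts" "(x, y) \<in> comp_edges (ts ! l)"
    | i' j' where "(i', j') \<in> G" "i' < length ts" "j' < length ts" "x \<in> part i'" "y \<in> part j'"
    by (auto simp: in_set_conv_nth)
  then show "(i = j \<and> (x, y) \<in> comp_edges (ts ! i)) \<or> (i, j) \<in> G"
  proof cases
    case (1 l)
    then have "x \<in> part l" and "y \<in> part l"
      using comp_edges_subset[of "ts ! l"] by auto
    then have "l = i" and "l = j"
      using parts_disjoint 1 i j x y by blast+
    then show ?thesis
      using 1 by simp
  next
    case (2 i' j')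
    then have "i' = i" and "j' = j"
      using parts_disjoint i j x y by blast+
    then show ?thesis
      using 2 by simp
  qed
next
  assume "(i = j \<and> (x, y) \<in> comp_edges (ts ! i)) \<or> (i, j) \<in> G"
  then show "(x, y) \<in> comp_edges (Node G ts)"
    using i j x y by (auto simp: nth_mem)
qed

text \<open>From now on \<open>verts_eq\<close> and \<open>edge_iff\<close> replace the defining equations of the
  composition, whose eager unfolding makes the automation diverge.\<close>
declare leaves.simps(2) [simp del] comp_edges.simps(2) [simp del]

lemma card_neighbours:
  assumes i: "i < length ts" and x: "x \<in> part i"
  shows "real (card {z \<in> verts. (x, z) \<in> comp_edges (Node G ts)}) =
    real (card {z \<in> part i. (x, z) \<in> comp_edges (ts ! i)}) + Nbr G ts i"
proof -
  let ?J = "{j. j < length ts \<and> (j, i) \<in> G}"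
  have "{z \<in> verts. (x, z) \<in> comp_edges (Node G ts)} =
      {z \<in> part i. (x, z) \<in> comp_edges (ts ! i)} \<union> (\<Union>j\<in>?J. part j)"
  proof (intro equalityI subsetI)
    fix z assume "z \<in> {z \<in> verts. (x, z) \<in> comp_edges (Node G ts)}"
    then obtain j where "j < length ts" "z \<in> part j" "(x, z) \<in> comp_edges (Node G ts)"
      by (auto simp: verts_eq)
    then show "z \<in> {z \<in> part i. (x, z) \<in> comp_edges (ts ! i)} \<union> (\<Union>j\<in>?J. part j)"
      using edge_iff[OF i _ x] sym_G by (auto dest: symD)
  next
    fix z assume "z \<in> {z \<in> part i. (x, z) \<in> comp_edges (ts ! i)} \<union> (\<Union>j\<in>?J. part j)"
    then obtain j where "j < length ts" "z \<in> part j" "(i = j \<and> (x, z) \<in> comp_edges (ts ! i)) \<or> (j, i) \<in> G"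
      using i by auto
    then show "z \<in> {z \<in> verts. (x, z) \<in> comp_edges (Node G ts)}"
      using edge_iff[OF i _ x] sym_G by (auto simp: verts_eq dest: symD)
  qed
  also have "real (card \<dots>) = real (card {z \<in> part i. (x, z) \<in> comp_edges (ts ! i)}) + (\<Sum>j\<in>?J. csize ts j)"
  proof -
    have "{z \<in> part i. (x, z) \<in> comp_edges (ts ! i)} \<inter> (\<Union>j\<in>?J. part j) = {}"
      using parts_disjoint i irrefl_G by fastforce
    moreover have "card (\<Union>j\<in>?J. part j) = (\<Sum>j\<in>?J. card (part j))"
      using parts_disjoint by (intro card_UN_disjoint) auto
    ultimately show ?thesis
      by (simp add: card_Un_disjoint csize_eq_card)
  qed
  finally show ?thesis
    by (simp add: Nbr_def)
qed

lemma lap_between: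
  assumes "i < length ts" and "j < length ts" and "i \<noteq> j" and "x \<in> part i" and "y \<in> part j"
  shows "lap x y = (if (i, j) \<in> G then - 1 else 0)"
  using assms parts_disjoint[of i j] edge_iff[of i j x y] by (auto simp: laplacian_def)

lemma lap_within:
  assumes i: "i < length ts" and "x \<in> part i" and "y \<in> part i"
  shows "lap x y = part_lap i x y + (if x = y then Nbr G ts i else 0)"
  using assms card_neighbours[OF i] edge_iff[OF i i] irrefl_G by (auto simp: laplacian_def)

lemma lap_part_sum:
  assumes i: "i < length ts" and j: "j < length ts" and x: "x \<in> part i"
  shows "(\<Sum>w\<in>part j. lap x w) = (if i = j then Nbr G ts i else if (i, j) \<in> G then - csize ts j else 0)"
proof (cases "i = j")
  case True
  have "(\<Sum>w\<in>part i. lap x w) = (\<Sum>w\<in>part i. part_lap i x w) + Nbr G ts i"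
    using x by (simp add: lap_within[OF i x] sum.distrib)
  also have "(\<Sum>w\<in>part i. part_lap i x w) = 0"
    using x comp_edges_irrefl[OF wf_child[OF i] distinct_child[OF i]] by (intro laplacian_row_sum) auto
  finally show ?thesis
    using True by simp
next
  case False
  then show ?thesis
    using lap_between[OF i j False x] by (simp add: csize_eq_card[OF j])
qed

definition rep :: "nat \<Rightarrow> 'a" where
  "rep i = hd (leaves (ts ! i))"

definition block :: "'a \<Rightarrow> nat" where
  "block x = (THE i. i < length ts \<and> x \<in> part i)"

lemma rep_in_part: "i < length ts \<Longrightarrow> rep i \<in> part i"
  using leaves_nonempty[OF wf_child] by (simp add: rep_def)

lemma block_eq: "i < length ts \<Longrightarrow> x \<in> part i \<Longrightarrow> block x = i"
  unfolding block_def using parts_disjoint by (intro the_equality) blast+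

lemma inj_on_rep: "inj_on rep {..<length ts}"
  using rep_in_part parts_disjoint by (intro inj_onI) (metis disjoint_iff lessThan_iff)

lemma fibre_rep: "j < length ts \<Longrightarrow> {w. w \<in> verts \<and> rep (block w) = rep j} = part j"
  using inj_on_rep by (auto simp: verts_eq block_eq inj_on_def) (metis lessThan_iff)

definition quotient_lap :: "nat \<Rightarrow> nat \<Rightarrow> real" where
  "quotient_lap i j = (\<Sum>w\<in>part j. lap (rep i) w)"

lemma char_poly_lap_equitable:
  "char_poly_on lap verts = char_poly_on quotient_lap {..<length ts} *
    char_poly_on (\<lambda>x y. lap x y - lap (rep (block x)) y) (verts - rep ` {..<length ts})"
proof -
  let ?F = "rep ` {..<length ts}"
  have "char_poly_on lap verts =
      char_poly_on (\<lambda>x y. \<Sum>w | w \<in> verts \<and> rep (block w) = y. lap x w) ?F *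
      char_poly_on (\<lambda>x y. lap x y - lap (rep (block x)) y) (verts - ?F)"
  proof (rule char_poly_on_equitable)
    show "?F \<subseteq> verts"
      using rep_in_part by (auto simp: verts_eq)
    show "rep (block x) \<in> ?F" if "x \<in> verts" for x
      using that by (auto simp: verts_eq block_eq)
    show "rep (block c) = c" if "c \<in> ?F" for c
      using that rep_in_part by (auto simp: block_eq)
    show "(\<Sum>w | w \<in> verts \<and> rep (block w) = y. lap x w) =
        (\<Sum>w | w \<in> verts \<and> rep (block w) = y. lap (rep (block x)) w)"
      if x: "x \<in> verts" and y: "y \<in> ?F" for x y
    proof -
      obtain i where "i < length ts" "x \<in> part i"
        using x by (auto simp: verts_eq)
      moreover obtain j where "j < length ts" "y = rep j"
        using y by auto
      ultimately show ?thesis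
        using lap_part_sum rep_in_part by (simp add: fibre_rep block_eq)
    qed
  qed simp
  also have "char_poly_on (\<lambda>x y. \<Sum>w | w \<in> verts \<and> rep (block w) = y. lap x w) ?F =
      char_poly_on quotient_lap {..<length ts}"
    using inj_on_rep by (simp add: char_poly_on_reindex quotient_lap_def)
      (intro char_poly_on_cong, simp_all add: fibre_rep quotient_lap_def)
  finally show ?thesis .
qed

lemma quotient_lap_row_sum:
  assumes "i < length ts"
  shows "(\<Sum>j<length ts. quotient_lap i j) = 0"
proof -
  have "(\<Sum>j<length ts. quotient_lap i j) = (\<Sum>w\<in>verts. lap (rep i) w)"
    unfolding quotient_lap_def verts_eq using parts_disjoint by (subst sum.UNION_disjoint) auto
  also have "\<dots> = 0"
    using assms rep_in_part comp_edges_irrefl[OF wf distinct_leaves]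
    by (intro laplacian_row_sum) (auto simp: verts_eq)
  finally show ?thesis .
qed

lemma char_poly_quotient_lap: "char_poly_on quotient_lap {..<length ts} = char_poly (qlap G ts)"
proof -
  let ?s = "\<lambda>i. sqrt (csize ts i)"
  have csize_pos: "csize ts i > 0" if "i < length ts" for i
    using leaves_nonempty[OF wf_child[OF that]] by (simp add: csize_def)
  have s_nonzero: "?s i \<noteq> 0" if "i < length ts" for i
    using csize_pos[OF that] by simp
  have entry: "?s i * quotient_lap i j / ?s j =
      (if i = j then Nbr G ts i else if (i, j) \<in> G then - sqrt (csize ts i * csize ts j) else 0)"
    if "i < length ts" "j < length ts" for i j
    using that csize_pos[OF that(1)] csize_pos[OF that(2)] lap_part_sum rep_in_part
    by (simp add: quotient_lap_def real_sqrt_mult field_simps)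
  have "char_poly_on quotient_lap {..<length ts} =
      char_poly_on (\<lambda>i j. ?s i * quotient_lap i j / ?s j) {..<length ts}"
    using s_nonzero by (intro char_poly_on_diag_scale[symmetric]) auto
  also have "\<dots> = char_poly (index_mat (\<lambda>i j. ?s i * quotient_lap i j / ?s j) [0..<length ts] [0..<length ts])"
    by (rule char_poly_on_list) auto
  also have "index_mat (\<lambda>i j. ?s i * quotient_lap i j / ?s j) [0..<length ts] [0..<length ts] = qlap G ts"
    by (rule eq_matI) (auto simp: qlap_def entry)
  finally show ?thesis .
qed

lemma char_poly_qlap: "char_poly (qlap G ts) = root_poly (mspec (qlap G ts))"
proof -
  have "qlap G ts $$ (i, j) = qlap G ts $$ (j, i)" if "i < length ts" "j < length ts" for i j
    using that sym_G by (auto simp: qlap_def mult.commute dest: symD)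
  then obtain \<sigma> where "char_poly (qlap G ts) = root_poly \<sigma>"
    using char_poly_real_symmetric[of "qlap G ts" "length ts"] by (auto simp: qlap_def)
  then show ?thesis
    by (simp add: mspec_eqI)
qed

lemma zero_in_mspec_qlap: "0 \<in># mspec (qlap G ts)"
proof -
  have "length ts \<ge> 2"
    using wf by simp
  then have "char_poly (qlap G ts) =
      [:- 0, 1:] * char_poly_on (\<lambda>i j. quotient_lap i j - quotient_lap 0 j) ({..<length ts} - {0})"
    unfolding char_poly_quotient_lap[symmetric] by (intro char_poly_on_deflate) (auto simp: quotient_lap_row_sum)
  then have "poly (char_poly (qlap G ts)) 0 = 0"
    by simp
  then show ?thesis
    by (simp add: char_poly_qlap poly_root_poly_eq_0)
qed

lemma char_poly_lap_deflated:
  "char_poly_on (\<lambda>x y. lap x y - lap (rep (block x)) y) (verts - rep ` {..<length ts}) =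
    (\<Prod>i<length ts. char_poly_on
      (\<lambda>x y. part_lap i x y - part_lap i (rep i) y + (if x = y then Nbr G ts i else 0)) (part i - {rep i}))"
proof -
  have "verts - rep ` {..<length ts} = (\<Union>i<length ts. part i - {rep i})"
    using rep_in_part parts_disjoint by (auto simp: verts_eq)
  moreover have "char_poly_on (\<lambda>x y. lap x y - lap (rep (block x)) y) (\<Union>i<length ts. part i - {rep i}) =
      (\<Prod>i<length ts. char_poly_on (\<lambda>x y. lap x y - lap (rep (block x)) y) (part i - {rep i}))"
    using parts_disjoint rep_in_part
    by (intro char_poly_on_UN_block_diagonal) (auto simp: disjoint_family_on_def block_eq lap_between)
  moreover have "char_poly_on (\<lambda>x y. lap x y - lap (rep (block x)) y) (part i - {rep i}) =
      char_poly_on (\<lambda>x y. part_lap i x y - part_lap i (rep i) y + (if x = y then Nbr G ts i else 0))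
        (part i - {rep i})" if i: "i < length ts" for i
    using rep_in_part[OF i] by (intro char_poly_on_cong) (auto simp: block_eq[OF i] lap_within[OF i])
  ultimately show ?thesis
    by simp
qed

lemma char_poly_lap_Node:
  assumes IH: "\<And>i. i < length ts \<Longrightarrow>
    char_poly_on (part_lap i) (part i) = root_poly (add_mset 0 (reduced_spectrum (ts ! i)))"
  shows "char_poly_on lap verts = root_poly (add_mset 0 (reduced_spectrum (Node G ts)))"
proof -
  let ?\<mu> = "\<lambda>i. image_mset (\<lambda>x. x + Nbr G ts i) (reduced_spectrum (ts ! i))"
  have "char_poly_on (\<lambda>x y. part_lap i x y - part_lap i (rep i) y + (if x = y then Nbr G ts i else 0))
      (part i - {rep i}) = root_poly (?\<mu> i)" if i: "i < length ts" for i
    using rep_in_part[OF i] comp_edges_irrefl[OF wf_child[OF i] distinct_child[OF i]] IH[OF i]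
    by (intro char_poly_on_shift_roots char_poly_on_deflate_roots laplacian_row_sum) auto
  then have "char_poly_on lap verts = root_poly (mspec (qlap G ts)) * (\<Prod>i<length ts. root_poly (?\<mu> i))"
    by (simp add: char_poly_lap_equitable char_poly_quotient_lap char_poly_lap_deflated char_poly_qlap)
  also have "\<dots> = root_poly (add_mset 0 (reduced_spectrum (Node G ts)))"
    using zero_in_mspec_qlap
    by (simp add: reduced_spectrum_Node root_poly_sum root_poly_union del: reduced_spectrum.simps)
  finally show ?thesis .
qed

end

lemma char_poly_composition_laplacian:
  fixes t :: "'a::linorder stree"
  shows "wf_ctree t \<Longrightarrow> distinct (leaves t) \<Longrightarrow>
    char_poly_on (laplacian (comp_edges t) (set (leaves t))) (set (leaves t)) =
      root_poly (add_mset 0 (reduced_spectrum t))"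
proof (induction t)
  case (Leaf x)
  then show ?case
    by (simp add: char_poly_on_singleton laplacian_def)
next
  case (Node G ts)
  interpret composition_node G ts
    using Node.prems by unfold_locales
  show ?case
    using Node.IH wf_child distinct_child by (intro char_poly_lap_Node) (simp add: nth_mem)
qed

theorem mainTheorem8:
  fixes T :: "'a::linorder stree"
  assumes "wf_ctree T"
    and "sorted_wrt (<) (leaves T)"
    and "length (leaves T) \<ge> 2"
  shows "mspec (laplacian_mat (leaves T) (compl_edges (leaves T) (comp_edges T)))
           = {#0#} + tree_part (length (leaves T)) 0 T"
proof -
  let ?vs = "leaves T"
  have distinct: "distinct ?vs"
    using assms(2) by (simp add: strict_sorted_iff)
  have "char_poly (laplacian_mat ?vs (compl_edges ?vs (comp_edges T))) =
      char_poly_on (laplacian (compl_edges ?vs (comp_edges T)) (set ?vs)) (set ?vs)"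
    by (simp add: laplacian_mat_eq_index_mat[OF distinct] char_poly_on_list[OF distinct])
  also have "\<dots> = root_poly (add_mset 0 (image_mset (\<lambda>x. real (length ?vs) - x) (reduced_spectrum T)))"
    using assms(1,3) distinct comp_edges_irrefl[OF assms(1) distinct]
    by (intro char_poly_laplacian_compl_edges char_poly_composition_laplacian) auto
  finally show ?thesis
    by (simp add: mspec_eqI tree_part_eq_reduced_spectrum)
qed

end
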